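(* Let $d\ge 2$ and let $C,C_1,C_2,\ldots$ be $d$-dimensional copulas. If $C_n \xrightarrow{\text{wcc}} C$, then for every $J\subseteq\{1,\dots,d-1\}$ with $1\le |J|\le d-1$ we have $(C_n)_{J\cup\{d\}} \xrightarrow{\text{wcc}} C_{J\cup\{d\}}$.
   Context: $\mathbb{I}=[0,1]$, $\lambda$ denotes Lebesgue measure. For a $k$-dimensional copula $A$ ($k\ge 2$), its Markov kernel $K_A:\mathbb{I}\times\mathcal{B}(\mathbb{I}^{k-1})\to\mathbb{I}$ is (a version of) the regular conditional distribution of $(U_1,\dots,U_{k-1})$ given $U_k=v$, where $(U_1,\dots,U_k)\sim A$; equivalently $A(\mathbf{u},v)=\int_{[0,v]}K_A(t,[\mathbf{0},\mathbf{u}])\,d\lambda(t)$. A sequence of $k$-dimensional copulas $(A_n)$ converges weakly conditional to $A$, written $A_n\xrightarrow{\text{wcc}}A$, if for $\lambda$-almost every $v\in\mathbb{I}$ the probability measures $K_{A_n}(v,\cdot)$ converge weakly to $K_A(v,\cdot)$ on $\mathcal{B}(\mathbb{I}^{k-1})$. For $J'=\{j_1<\dots<j_m\}\subseteq\{1,\dots,d\}$ with $m\ge2$, $C_{J'}$ denotes the marginal copula of $C$ in the coordinates $j_1,\dots,j_m$ (in this order), so that in $C_{J\cup\{d\}}$ the last coordinate is coordinate $d$ of $C$. *)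

theory Defs
  imports "HOL-Probability.Probability"
begin

text \<open>Points of the unit cube are functions nat => real; a k-dimensional object uses
  the coordinates 1..k. The unit cube I^k as a subset:\<close>

definition unit_cube :: "nat \<Rightarrow> (nat \<Rightarrow> real) set" where
  "unit_cube k = {x. \<forall>i\<in>{1..k}. 0 \<le> x i \<and> x i \<le> 1}"

definition is_copula :: "nat \<Rightarrow> ((nat \<Rightarrow> real) \<Rightarrow> real) \<Rightarrow> bool" where
  "is_copula k C \<longleftrightarrow> 2 \<le> k
    \<and> (\<forall>x y. (\<forall>i\<in>{1..k}. x i = y i) \<longrightarrow> C x = C y)
    \<and> (\<forall>x\<in>unit_cube k. (\<exists>i\<in>{1..k}. x i = 0) \<longrightarrow> C x = 0)
    \<and> (\<forall>x\<in>unit_cube k. \<forall>i\<in>{1..k}. (\<forall>j\<in>{1..k} - {i}. x j = 1) \<longrightarrow> C x = x i)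
    \<and> (\<forall>a\<in>unit_cube k. \<forall>b\<in>unit_cube k. (\<forall>i\<in>{1..k}. a i \<le> b i) \<longrightarrow>
         0 \<le> (\<Sum>S\<in>Pow {1..k}. (-1::real) ^ card ({1..k} - S) *
                 C (\<lambda>i. if i \<in> S then b i else a i)))"

text \<open>Marginal copula C_{J'}: the coordinates j_1 < ... < j_m of J' become coordinates
  1..m (in this order); all other coordinates of C are set to 1.\<close>

definition marg :: "((nat \<Rightarrow> real) \<Rightarrow> real) \<Rightarrow> nat set \<Rightarrow> (nat \<Rightarrow> real) \<Rightarrow> real" where
  "marg C J' u = C (\<lambda>i. if i \<in> J' then u (card {j\<in>J'. j \<le> i}) else 1)"

definition cube :: "nat \<Rightarrow> (nat \<Rightarrow> real) measure" where
  "cube m = PiM {1..m} (\<lambda>_. restrict_space borel {0..1::real})"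

text \<open>K is (a version of) the Markov kernel of the k-dimensional copula A:
  a measurable map t |-> K t from I into probability measures on I^(k-1) with
  A(u,v) = integral over [0,v] of K(t,[0,u]).\<close>

definition is_markov_kernel ::
  "nat \<Rightarrow> ((nat \<Rightarrow> real) \<Rightarrow> real) \<Rightarrow> (real \<Rightarrow> (nat \<Rightarrow> real) measure) \<Rightarrow> bool" where
  "is_markov_kernel k A K \<longleftrightarrow>
     K \<in> measurable (restrict_space lborel {0..1}) (prob_algebra (cube (k - 1)))
     \<and> (\<forall>u\<in>space (cube (k - 1)). \<forall>v\<in>{0..1}.
          A (u(k := v)) =
          (LINT t:{0..v}|lborel. measure (K t) {x \<in> space (cube (k - 1)). \<forall>i\<in>{1..k-1}. x i \<le> u i}))"

definition weak_conv_cube :: "nat \<Rightarrow> (nat \<Rightarrow> (nat \<Rightarrow> real) measure) \<Rightarrow> (nat \<Rightarrow> real) measure \<Rightarrow> bool" where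
  "weak_conv_cube m Mn M \<longleftrightarrow>
     (\<forall>f :: (nat \<Rightarrow> real) \<Rightarrow> real.
        continuous_on (space (cube m)) f \<and> (\<exists>B. \<forall>x\<in>space (cube m). \<bar>f x\<bar> \<le> B) \<longrightarrow>
        (\<lambda>n. integral\<^sup>L (Mn n) f) \<longlonglongrightarrow> integral\<^sup>L M f)"

definition wcc :: "nat \<Rightarrow> (nat \<Rightarrow> (nat \<Rightarrow> real) \<Rightarrow> real) \<Rightarrow> ((nat \<Rightarrow> real) \<Rightarrow> real) \<Rightarrow> bool" where
  "wcc k An A \<longleftrightarrow>
     (\<exists>Kn K. (\<forall>n. is_markov_kernel k (An n) (Kn n)) \<and> is_markov_kernel k A K
        \<and> (AE v in lborel. v \<in> {0..1} \<longrightarrow> weak_conv_cube (k - 1) (\<lambda>n. Kn n v) (K v)))"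

end

theory Submission imports Defs begin

text \<open>The Markov kernel of the marginal copula \<open>C\<^bsub>J \<union> {d}\<^esub>\<close> is the image of the
  kernel of \<open>C\<close> under the continuous coordinate projection \<open>x \<mapsto> x\<^sub>J\<close>: the lower orthant
  \<open>[0, u]\<close> of \<open>I\<^bsup>|J|\<^esup>\<close> pulls back to the lower orthant \<open>[0, w]\<close> of \<open>I\<^bsup>d-1\<^esup>\<close>, where
  \<open>w\<close> has the entries of \<open>u\<close> at the coordinates in \<open>J\<close> and \<open>1\<close> elsewhere. Weak convergence
  of probability measures is preserved by continuous maps, so \<open>K\<^bsub>C\<^sub>n\<^esub>(v, \<cdot>) \<rightarrow> K\<^bsub>C\<^esub>(v, \<cdot>)\<close>
  carries over to the projected kernels for the same \<open>v\<close>.\<close>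

definition rank_in :: "nat set \<Rightarrow> nat \<Rightarrow> nat" where
  "rank_in J i = card {j\<in>J. j \<le> i}"

definition unrank_in :: "nat set \<Rightarrow> nat \<Rightarrow> nat" where
  "unrank_in J = the_inv_into J (rank_in J)"

lemma strict_mono_on_rank_in:
  assumes "finite J"
  shows "strict_mono_on J (rank_in J)"
proof (rule strict_mono_onI)
  fix i i' assume "i \<in> J" "i' \<in> J" "i < i'"
  then have "i' \<notin> {j\<in>J. j \<le> i}" "i' \<in> {j\<in>J. j \<le> i'}"
    and "{j\<in>J. j \<le> i} \<subseteq> {j\<in>J. j \<le> i'}"
    by auto
  then have "{j\<in>J. j \<le> i} \<subset> {j\<in>J. j \<le> i'}"
    by blast
  then show "rank_in J i < rank_in J i'"
    unfolding rank_in_def by (rule psubset_card_mono[rotated]) (use assms in simp)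
qed

lemma bij_betw_rank_in:
  assumes "finite J"
  shows "bij_betw (rank_in J) J {1..card J}"
proof -
  have inj: "inj_on (rank_in J) J"
    using strict_mono_on_imp_inj_on[OF strict_mono_on_rank_in[OF assms]] .
  have "rank_in J i \<in> {1..card J}" if "i \<in> J" for i
  proof -
    have sub: "{j\<in>J. j \<le> i} \<subseteq> J" and ne: "{j\<in>J. j \<le> i} \<noteq> {}"
      using that by auto
    have "0 < rank_in J i"
      unfolding rank_in_def using ne finite_subset[OF sub assms] by (simp add: card_gt_0_iff)
    moreover have "rank_in J i \<le> card J"
      unfolding rank_in_def using card_mono[OF assms sub] .
    ultimately show ?thesis
      by simp
  qed
  then have "rank_in J ` J \<subseteq> {1..card J}"
    by blast
  moreover have "card (rank_in J ` J) = card {1..card J}"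
    using card_image[OF inj] by simp
  ultimately have "rank_in J ` J = {1..card J}"
    by (simp add: card_subset_eq)
  with inj show ?thesis
    by (simp add: bij_betw_def)
qed

lemma rank_in_in: "finite J \<Longrightarrow> i \<in> J \<Longrightarrow> rank_in J i \<in> {1..card J}"
  using bij_betwE[OF bij_betw_rank_in] by blast

lemma unrank_in_in: "finite J \<Longrightarrow> i \<in> {1..card J} \<Longrightarrow> unrank_in J i \<in> J"
  unfolding unrank_in_def using bij_betwE[OF bij_betw_the_inv_into[OF bij_betw_rank_in]] by blast

lemma rank_in_unrank_in: "finite J \<Longrightarrow> i \<in> {1..card J} \<Longrightarrow> rank_in J (unrank_in J i) = i"
  unfolding unrank_in_def using bij_betw_rank_in by (metis bij_betw_def f_the_inv_into_f)

lemma unrank_in_rank_in: "finite J \<Longrightarrow> i \<in> J \<Longrightarrow> unrank_in J (rank_in J i) = i"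
  unfolding unrank_in_def using bij_betw_rank_in by (metis bij_betw_def the_inv_into_f_f)

lemma rank_in_insert_greater:
  assumes "\<forall>j\<in>J. j < d" "i \<in> J"
  shows "rank_in (insert d J) i = rank_in J i"
proof -
  have "{j \<in> insert d J. j \<le> i} = {j \<in> J. j \<le> i}"
    using assms by fastforce
  then show ?thesis
    unfolding rank_in_def by simp
qed

lemma rank_in_insert_greatest:
  assumes "finite J" "\<forall>j\<in>J. j < d"
  shows "rank_in (insert d J) d = card J + 1"
proof -
  have "{j \<in> insert d J. j \<le> d} = insert d J" "d \<notin> J"
    using assms(2) by auto
  then show ?thesis
    unfolding rank_in_def using assms(1) by simp
qed

definition select_coords :: "nat set \<Rightarrow> (nat \<Rightarrow> real) \<Rightarrow> nat \<Rightarrow> real" where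
  "select_coords J x = restrict (\<lambda>i. x (unrank_in J i)) {1..card J}"

definition pad_coords :: "nat set \<Rightarrow> nat \<Rightarrow> (nat \<Rightarrow> real) \<Rightarrow> nat \<Rightarrow> real" where
  "pad_coords J n u = restrict (\<lambda>i. if i \<in> J then u (rank_in J i) else 1) {1..n}"

definition lower_orthant :: "nat \<Rightarrow> (nat \<Rightarrow> real) \<Rightarrow> (nat \<Rightarrow> real) set" where
  "lower_orthant m u = {x \<in> space (cube m). \<forall>i\<in>{1..m}. x i \<le> u i}"

lemma space_cube: "space (cube m) = PiE {1..m} (\<lambda>_. {0..1::real})"
  unfolding cube_def by (simp add: space_PiM space_restrict_space)

lemma measurable_component_cube [measurable]:
  assumes "i \<in> {1..m}"
  shows "(\<lambda>x. x i) \<in> borel_measurable (cube m)"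
proof -
  have "(\<lambda>x. x i) \<in> cube m \<rightarrow>\<^sub>M restrict_space borel {0..1}"
    unfolding cube_def using assms by (rule measurable_component_singleton)
  moreover have "(\<lambda>x::real. x) \<in> restrict_space borel {0..1} \<rightarrow>\<^sub>M borel"
    by (rule measurable_restrict_space1) simp
  ultimately show ?thesis
    by (rule measurable_compose)
qed

lemma sets_lower_orthant [measurable]: "lower_orthant m u \<in> sets (cube m)"
  unfolding lower_orthant_def by measurable

lemma measurable_select_coords:
  assumes "J \<subseteq> {1..n}"
  shows "select_coords J \<in> cube n \<rightarrow>\<^sub>M cube (card J)"
  unfolding select_coords_def[abs_def] cube_def
proof (rule measurable_restrict)
  fix i assume "i \<in> {1..card J}"
  then have "unrank_in J i \<in> {1..n}"
    using unrank_in_in[OF finite_subset[OF assms]] assms by blast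
  then show "(\<lambda>x. x (unrank_in J i))
      \<in> (\<Pi>\<^sub>M i\<in>{1..n}. restrict_space borel {0..1}) \<rightarrow>\<^sub>M restrict_space borel {0..1}"
    by (rule measurable_component_singleton)
qed

lemma continuous_on_select_coords: "continuous_on S (select_coords J)"
  unfolding select_coords_def[abs_def]
proof (intro continuous_on_coordinatewise_then_product)
  fix i
  show "continuous_on S (\<lambda>x. restrict (\<lambda>i. x (unrank_in J i)) {1..card J} i)"
  proof (cases "i \<in> {1..card J}")
    case True
    then show ?thesis
      by (simp add: continuous_on_subset[OF continuous_on_product_coordinates])
  next
    case False
    then have undef: "(\<lambda>x. restrict (\<lambda>i. x (unrank_in J i)) {1..card J} i) = (\<lambda>x. undefined)"
      by auto
    show ?thesis
      unfolding undef by (rule continuous_on_const)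
  qed
qed

lemma pad_coords_in_space:
  assumes "finite J" "u \<in> space (cube (card J))"
  shows "pad_coords J n u \<in> space (cube n)"
  using assms rank_in_in[OF assms(1)] unfolding pad_coords_def space_cube by (auto simp: PiE_iff)

lemma vimage_select_coords_lower_orthant:
  assumes sub: "J \<subseteq> {1..n}"
  shows "select_coords J -` lower_orthant (card J) u \<inter> space (cube n)
           = lower_orthant n (pad_coords J n u)"
proof -
  have fin: "finite J"
    using finite_subset[OF sub] by simp
  show ?thesis
  proof (intro set_eqI iffI)
    fix x assume x: "x \<in> select_coords J -` lower_orthant (card J) u \<inter> space (cube n)"
    have "x (unrank_in J i) \<le> u i" if "i \<in> {1..card J}" for i
      using x that unfolding select_coords_def lower_orthant_def by auto
    then have "x i \<le> pad_coords J n u i" if "i \<in> {1..n}" for i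
      using x that unrank_in_rank_in[OF fin] rank_in_in[OF fin]
      unfolding pad_coords_def space_cube by (cases "i \<in> J") force+
    then show "x \<in> lower_orthant n (pad_coords J n u)"
      using x unfolding lower_orthant_def by auto
  next
    fix x assume x: "x \<in> lower_orthant n (pad_coords J n u)"
    have "x (unrank_in J i) \<le> u i" if "i \<in> {1..card J}" for i
      using x sub unrank_in_in[OF fin that] rank_in_unrank_in[OF fin that]
      unfolding lower_orthant_def pad_coords_def by force
    moreover have "select_coords J x \<in> space (cube (card J))"
      using measurable_space[OF measurable_select_coords[OF sub]] x
      unfolding lower_orthant_def by auto
    ultimately show "x \<in> select_coords J -` lower_orthant (card J) u \<inter> space (cube n)"
      using x unfolding lower_orthant_def select_coords_def by auto
  qed
qed

lemma weak_conv_cube_distr: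
  assumes g: "g \<in> cube n \<rightarrow>\<^sub>M cube m" "continuous_on (space (cube n)) g"
    and sets: "\<And>k. sets (Mn k) = sets (cube n)" "sets M = sets (cube n)"
    and conv: "weak_conv_cube n Mn M"
  shows "weak_conv_cube m (\<lambda>k. distr (Mn k) (cube m) g) (distr M (cube m) g)"
  unfolding weak_conv_cube_def
proof (intro allI impI)
  fix f :: "(nat \<Rightarrow> real) \<Rightarrow> real"
  assume "continuous_on (space (cube m)) f \<and> (\<exists>B. \<forall>x\<in>space (cube m). \<bar>f x\<bar> \<le> B)"
  then obtain B where f: "continuous_on (space (cube m)) f" "\<forall>x\<in>space (cube m). \<bar>f x\<bar> \<le> B"
    by blast
  have g_space: "g ` space (cube n) \<subseteq> space (cube m)"
    using measurable_space[OF g(1)] by blast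
  show "(\<lambda>k. integral\<^sup>L (distr (Mn k) (cube m) g) f) \<longlonglongrightarrow> integral\<^sup>L (distr M (cube m) g) f"
  proof (cases "f \<in> borel_measurable (cube m)")
    case True
    have "continuous_on (space (cube n)) (f \<circ> g)"
      using continuous_on_compose[OF g(2) continuous_on_subset[OF f(1) g_space]] .
    moreover have "\<forall>x\<in>space (cube n). \<bar>(f \<circ> g) x\<bar> \<le> B"
      using f(2) g_space by auto
    ultimately have "(\<lambda>k. integral\<^sup>L (Mn k) (f \<circ> g)) \<longlonglongrightarrow> integral\<^sup>L M (f \<circ> g)"
      using conv unfolding weak_conv_cube_def by blast
    moreover have "g \<in> N \<rightarrow>\<^sub>M cube m" if "sets N = sets (cube n)" for N
      using g(1) that by (simp cong: measurable_cong_sets)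
    ultimately show ?thesis
      using sets by (simp add: integral_distr True comp_def)
  next
    case False
    then have "\<not> integrable (distr N (cube m) g) f" for N
      by (metis borel_measurable_integrable measurable_cong_sets sets_distr)
    then show ?thesis
      by (simp add: not_integrable_integral_eq)
  qed
qed

lemma sets_markov_kernel:
  assumes "is_markov_kernel k A K" "v \<in> {0..1}"
  shows "sets (K v) = sets (cube (k - 1))"
proof -
  have "v \<in> space (restrict_space lborel {0..1})"
    using assms(2) by (simp add: space_restrict_space)
  moreover have "K \<in> restrict_space lborel {0..1} \<rightarrow>\<^sub>M prob_algebra (cube (k - 1))"
    using assms(1) unfolding is_markov_kernel_def by blast
  ultimately have "K v \<in> space (prob_algebra (cube (k - 1)))"
    by (rule measurable_space[rotated])
  then show ?thesis
    by (simp add: space_prob_algebra)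
qed

lemma marg_insert_last:
  assumes cop: "is_copula d A" and sub: "J \<subseteq> {1..d-1}"
  shows "marg A (J \<union> {d}) (u(card J + 1 := v)) = A ((pad_coords J (d - 1) u)(d := v))"
proof -
  have fin: "finite J"
    using finite_subset[OF sub] by simp
  have less: "\<forall>j\<in>J. j < d"
    using sub by fastforce
  have coords: "\<forall>x y. (\<forall>i\<in>{1..d}. x i = y i) \<longrightarrow> A x = A y"
    using cop unfolding is_copula_def by blast
  have entries: "(if i \<in> J \<union> {d} then (u(card J + 1 := v)) (rank_in (J \<union> {d}) i) else 1)
      = ((pad_coords J (d - 1) u)(d := v)) i" if "i \<in> {1..d}" for i
  proof (cases "i = d")
    case False
    then have "i \<in> J \<Longrightarrow> rank_in (J \<union> {d}) i \<noteq> card J + 1"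
      using rank_in_insert_greater[OF less] rank_in_in[OF fin] by fastforce
    with False that show ?thesis
      using rank_in_insert_greater[OF less] unfolding pad_coords_def by auto
  qed (use rank_in_insert_greatest[OF fin less] in simp)
  show ?thesis
    unfolding marg_def rank_in_def[symmetric] by (rule coords[rule_format]) (rule entries)
qed

lemma is_markov_kernel_marg:
  assumes cop: "is_copula d A" and K: "is_markov_kernel d A K" and sub: "J \<subseteq> {1..d-1}"
  shows "is_markov_kernel (card J + 1) (marg A (J \<union> {d}))
           (\<lambda>t. distr (K t) (cube (card J)) (select_coords J))"
proof -
  have fin: "finite J"
    using sub finite_subset by blast
  have sel: "select_coords J \<in> cube (d - 1) \<rightarrow>\<^sub>M cube (card J)"
    using measurable_select_coords[OF sub] .
  have "K \<in> restrict_space lborel {0..1} \<rightarrow>\<^sub>M prob_algebra (cube (d - 1))"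
    using K unfolding is_markov_kernel_def by blast
  then have meas: "(\<lambda>t. distr (K t) (cube (card J)) (select_coords J))
      \<in> restrict_space lborel {0..1} \<rightarrow>\<^sub>M prob_algebra (cube (card J))"
    by (rule measurable_compose[OF _ measurable_distr_prob_space[OF sel]])
  have distr_orthant: "measure (distr (K t) (cube (card J)) (select_coords J)) (lower_orthant (card J) u)
      = measure (K t) (lower_orthant (d - 1) (pad_coords J (d - 1) u))" if "t \<in> {0..1}" for t u
  proof -
    have sets_K: "sets (K t) = sets (cube (d - 1))"
      using sets_markov_kernel[OF K that] .
    then have "select_coords J \<in> K t \<rightarrow>\<^sub>M cube (card J)"
      using sel by (simp cong: measurable_cong_sets)
    then have "measure (distr (K t) (cube (card J)) (select_coords J)) (lower_orthant (card J) u)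
        = measure (K t) (select_coords J -` lower_orthant (card J) u \<inter> space (K t))"
      by (rule measure_distr[OF _ sets_lower_orthant])
    also have "\<dots> = measure (K t) (lower_orthant (d - 1) (pad_coords J (d - 1) u))"
      unfolding sets_eq_imp_space_eq[OF sets_K] vimage_select_coords_lower_orthant[OF sub] ..
    finally show ?thesis .
  qed
  have cdf: "A (w(d := v)) = (LINT t:{0..v}|lborel. measure (K t) (lower_orthant (d - 1) w))"
    if "w \<in> space (cube (d - 1))" "v \<in> {0..1}" for w v
    using K that unfolding is_markov_kernel_def lower_orthant_def by blast
  have "marg A (J \<union> {d}) (u(card J + 1 := v)) = (LINT t:{0..v}|lborel.
      measure (distr (K t) (cube (card J)) (select_coords J)) (lower_orthant (card J) u))"
    if u: "u \<in> space (cube (card J))" and v: "v \<in> {0..1}" for u v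
  proof -
    have "marg A (J \<union> {d}) (u(card J + 1 := v)) = A ((pad_coords J (d - 1) u)(d := v))"
      using marg_insert_last[OF cop sub] .
    also have "\<dots> = (LINT t:{0..v}|lborel. measure (K t) (lower_orthant (d - 1) (pad_coords J (d - 1) u)))"
      using cdf[OF pad_coords_in_space[OF fin u] v] .
    also have "\<dots> = (LINT t:{0..v}|lborel.
        measure (distr (K t) (cube (card J)) (select_coords J)) (lower_orthant (card J) u))"
      using v distr_orthant by (intro set_lebesgue_integral_cong) auto
    finally show ?thesis .
  qed
  with meas show ?thesis
    unfolding is_markov_kernel_def lower_orthant_def by simp
qed

theorem theorem2p2:
  fixes d :: nat and C :: "(nat \<Rightarrow> real) \<Rightarrow> real"
    and Cn :: "nat \<Rightarrow> (nat \<Rightarrow> real) \<Rightarrow> real" and J :: "nat set"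
  assumes "d \<ge> 2"
    and "is_copula d C" and "\<forall>n. is_copula d (Cn n)"
    and "wcc d Cn C"
    and "J \<subseteq> {1..d-1}" and "1 \<le> card J" and "card J \<le> d - 1"
  shows "wcc (card J + 1) (\<lambda>n. marg (Cn n) (J \<union> {d})) (marg C (J \<union> {d}))"
proof -
  obtain Kn K where Kn: "\<And>n. is_markov_kernel d (Cn n) (Kn n)" and K: "is_markov_kernel d C K"
    and conv: "AE v in lborel. v \<in> {0..1} \<longrightarrow> weak_conv_cube (d - 1) (\<lambda>n. Kn n v) (K v)"
    using assms(4) unfolding wcc_def by blast
  let ?proj = "\<lambda>L (t::real). distr (L t) (cube (card J)) (select_coords J)"
  have conv_proj: "AE v in lborel. v \<in> {0..1} \<longrightarrow>
      weak_conv_cube (card J) (\<lambda>n. ?proj (Kn n) v) (?proj K v)"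
    using conv by eventually_elim
      (auto intro!: weak_conv_cube_distr measurable_select_coords[OF assms(5)]
        continuous_on_select_coords simp: sets_markov_kernel[OF Kn] sets_markov_kernel[OF K])
  have kernels: "is_markov_kernel (card J + 1) (marg (Cn n) (J \<union> {d})) (?proj (Kn n))" for n
    using is_markov_kernel_marg[OF assms(3)[rule_format] Kn assms(5)] .
  have kernel: "is_markov_kernel (card J + 1) (marg C (J \<union> {d})) (?proj K)"
    using is_markov_kernel_marg[OF assms(2) K assms(5)] .
  show ?thesis
    unfolding wcc_def add_diff_cancel_right'
    by (rule exI[of _ "\<lambda>n. ?proj (Kn n)"], rule exI[of _ "?proj K"])
      (intro conjI allI kernels kernel conv_proj)
qed

end
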